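(* For every $k\ge1$, as polynomials in $j$, \begin{align*} \sigma_k(j)&=\frac{1}{2^kk!}j^{2k}-\frac{2k+1}{3\cdot2^k(k-1)!}j^{2k-1}+O(j^{2k-2}),\\ Q_k(j)&=\frac{(-1)^k}{2^kk!}j^{2k}+\frac{(-1)^k(2k-5)}{3\cdot2^k(k-1)!}j^{2k-1}+O(j^{2k-2}), \end{align*} where $O(j^{2k-2})$ denotes a polynomial in $j$ of degree at most $2k-2$.
   Context: For positive integers $j$: $\sigma_0(j)=1$, $\sigma_i(j)=\sum_{1\le n_1<\cdots<n_i\le j-1}n_1\cdots n_i$ for $1\le i\le j-1$, $\sigma_i(j)=0$ for $i\ge j$; $Q_0(j)=1$ and $Q_k(j)=-\sum_{i=1}^k\sigma_i(j)Q_{k-i}(j)$ for $k\ge1$. For each fixed $k$, $\sigma_k(j)$ and $Q_k(j)$ agree on all positive integers $j$ with polynomials in $j$ with rational coefficients, and are identified with these polynomials. *)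

theory Defs
  imports Main "HOL-Computational_Algebra.Polynomial"
begin

text \<open>sigma i j: elementary symmetric sum of degree i in 1, ..., j-1
  (sum over i-element subsets of {1..j-1} of the product of their elements).
  This gives 1 for i = 0 and 0 for i >= j, as in the paper.\<close>
definition sigma :: "nat \<Rightarrow> nat \<Rightarrow> rat" where
  "sigma i j = (\<Sum>S \<in> {S. S \<subseteq> {1..<j} \<and> card S = i}. \<Prod>n\<in>S. of_nat n)"

fun Q :: "nat \<Rightarrow> nat \<Rightarrow> rat" where
  "Q 0 j = 1"
| "Q (Suc k) j = - (\<Sum>i\<in>{1..Suc k}. sigma i j * Q (Suc k - i) j)"

end

(*
  The sigma_i(j) are the coefficients of prod_{n<j} (1 + n X), and the Q_i(j) those of its
  reciprocal.  Multiplying by the next factor 1 + j X gives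
    sigma_{k+1}(j+1) = sigma_{k+1}(j) + j sigma_k(j),   Q_{k+1}(j+1) = Q_{k+1}(j) - j Q_k(j+1),
  so sigma_{k+1} and Q_{k+1} are partial sums of polynomials built from sigma_k and Q_k.
  Every polynomial is the forward difference of one of degree one higher, and the binomial
  expansion of q(x+1) shows: if g(j) = a j^(m+1) + b j^m + O(j^(m-1)), then
    sum_{i<j} g(i) = a/(m+2) j^(m+2) + (b/(m+1) - a/2) j^(m+1) + O(j^m).
  Induction on k now only has to track the two leading coefficients.
*)
theory Submission
  imports Defs "HOL-Computational_Algebra.Formal_Power_Series"
begin

lemma pcompose_power: "pcompose (p ^ n) r = pcompose p r ^ n"
  for p r :: "'a::comm_semiring_1 poly"
  by (induction n) (simp_all add: pcompose_mult pcompose_1)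

lemma coeff_pcompose_x_plus_1:
  fixes q :: "'a::comm_semiring_1 poly"
  assumes "degree q \<le> N"
  shows "coeff (pcompose q [:1, 1:]) i = (\<Sum>m\<le>N. of_nat (m choose i) * coeff q m)"
proof -
  have "pcompose q [:1, 1:] = (\<Sum>m\<le>N. smult (coeff q m) ([:1, 1:] ^ m))"
    by (subst (1) poly_as_sum_of_monoms'[OF assms, symmetric])
       (simp add: pcompose_sum monom_altdef pcompose_smult pcompose_power pcompose_pCons)
  moreover have "coeff ([:1, 1:] ^ m) i = (of_nat (m choose i) :: 'a)" for m
    by (cases "i \<le> m") (simp_all add: coeff_linear_poly_power binomial_eq_0 coeff_eq_0
        degree_linear_power)
  ultimately show ?thesis
    by (simp add: coeff_sum mult.commute)
qed

lemma coeff_pcompose_x_plus_1_top: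
  fixes q :: "'a::comm_semiring_1 poly"
  assumes "degree q \<le> Suc (Suc i)"
  shows "coeff (pcompose q [:1, 1:]) i =
    coeff q i + of_nat (Suc i) * coeff q (Suc i)
      + of_nat (Suc (Suc i) choose 2) * coeff q (Suc (Suc i))"
proof -
  have "Suc (Suc i) choose i = Suc (Suc i) choose 2"
    using binomial_symmetric[of i "Suc (Suc i)"] by simp
  moreover have "(\<Sum>m<i. of_nat (m choose i) * coeff q m) = (0::'a)"
    by (intro sum.neutral) (simp add: binomial_eq_0)
  ultimately show ?thesis
    by (simp add: coeff_pcompose_x_plus_1[OF assms] lessThan_Suc_atMost[symmetric] add_ac)
qed

definition forward_diff :: "'a::comm_ring_1 poly \<Rightarrow> 'a poly" where
  "forward_diff q = pcompose q [:1, 1:] - q"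

lemma poly_forward_diff: "poly (forward_diff q) x = poly q (x + 1) - poly q x"
  by (simp add: forward_diff_def poly_pcompose add.commute)

lemma forward_diff_add: "forward_diff (p + q) = forward_diff p + forward_diff q"
  by (simp add: forward_diff_def pcompose_add)

lemma coeff_forward_diff:
  assumes "degree q \<le> Suc (Suc i)"
  shows "coeff (forward_diff q) i =
    of_nat (Suc i) * coeff q (Suc i) + of_nat (Suc (Suc i) choose 2) * coeff q (Suc (Suc i))"
  using coeff_pcompose_x_plus_1_top[OF assms] by (simp add: forward_diff_def)

lemma coeff_forward_diff_top:
  assumes "degree q \<le> Suc i"
  shows "coeff (forward_diff q) i = of_nat (Suc i) * coeff q (Suc i)"
  using assms coeff_forward_diff[of q i] by (simp add: coeff_eq_0)

lemma degree_forward_diff: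
  assumes "degree q \<le> Suc d"
  shows "degree (forward_diff q) \<le> d"
proof (rule degree_le, intro allI impI)
  fix i assume "d < i"
  then consider "i = Suc d" | "degree q < i"
    using assms by linarith
  then show "coeff (forward_diff q) i = 0"
  proof cases
    case 1
    then show ?thesis
      using assms coeff_forward_diff_top[of q i] by (simp add: coeff_eq_0)
  next
    case 2
    then have "degree (pcompose q [:1, 1:]) < i"
      using degree_pcompose_le[of q "[:1, 1:]"] by simp
    with 2 show ?thesis
      by (simp add: forward_diff_def coeff_eq_0)
  qed
qed

lemma forward_diff_surj:
  fixes p :: "'a::field_char_0 poly"
  assumes "\<forall>i\<ge>d. coeff p i = 0"
  shows "\<exists>q. degree q \<le> d \<and> forward_diff q = p"
  using assms
proof (induction d arbitrary: p)
  case 0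
  then have "p = 0"
    by (simp add: poly_eq_iff)
  then show ?case
    by (intro exI[of _ 0]) (simp add: forward_diff_def)
next
  case (Suc d)
  define r where "r = monom (coeff p d / of_nat (Suc d)) (Suc d)"
  have r: "degree r \<le> Suc d"
    by (simp add: r_def degree_monom_le)
  have "\<forall>i\<ge>d. coeff (p - forward_diff r) i = 0"
  proof (intro allI impI)
    fix i assume "d \<le> i"
    then consider "i = d" | "Suc d \<le> i" "degree (forward_diff r) < i"
      using degree_forward_diff[OF r] by linarith
    then show "coeff (p - forward_diff r) i = 0"
      using Suc.prems coeff_forward_diff_top[OF r]
      by cases (simp_all add: r_def coeff_eq_0 del: of_nat_Suc)
  qed
  then obtain q where "degree q \<le> d" "forward_diff q = p - forward_diff r"
    using Suc.IH by blast
  then show ?case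
    using r by (intro exI[of _ "r + q"]) (simp add: forward_diff_add degree_add_le)
qed

definition leading_terms :: "(nat \<Rightarrow> 'a::field_char_0) \<Rightarrow> nat \<Rightarrow> 'a \<Rightarrow> 'a \<Rightarrow> bool" where
  "leading_terms f m a b \<longleftrightarrow>
     (\<exists>P. degree P \<le> Suc m \<and> coeff P (Suc m) = a \<and> coeff P m = b \<and>
        (\<forall>j. f j = poly P (of_nat j)))"

lemma leading_terms_of_nat: "leading_terms of_nat 0 1 0"
  unfolding leading_terms_def by (intro exI[of _ "[:0, 1:]"]) simp

lemma leading_terms_uminus:
  "leading_terms f m a b \<Longrightarrow> leading_terms (\<lambda>j. - f j) m (- a) (- b)"
  unfolding leading_terms_def by (metis coeff_minus degree_minus poly_minus)

lemma leading_terms_mult_of_nat: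
  assumes "leading_terms f m a b"
  shows "leading_terms (\<lambda>j. of_nat j * f j) (Suc m) a b"
proof -
  obtain P where "degree P \<le> Suc m" "coeff P (Suc m) = a" "coeff P m = b"
      "\<forall>j. f j = poly P (of_nat j)"
    using assms by (auto simp: leading_terms_def)
  then show ?thesis
    unfolding leading_terms_def
    by (intro exI[of _ "pCons 0 P"]) (simp add: degree_pCons_le)
qed

lemma leading_terms_shift:
  assumes "leading_terms f m a b"
  shows "leading_terms (\<lambda>j. f (Suc j)) m a (b + of_nat (Suc m) * a)"
proof -
  obtain P where P: "degree P \<le> Suc m" "coeff P (Suc m) = a" "coeff P m = b"
      "\<forall>j. f j = poly P (of_nat j)"
    using assms by (auto simp: leading_terms_def)
  have "coeff (pcompose P [:1, 1:]) (Suc m) = a"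
    and "coeff (pcompose P [:1, 1:]) m = b + of_nat (Suc m) * a"
    using P(1-3) coeff_pcompose_x_plus_1_top[of P m] coeff_pcompose_x_plus_1_top[of P "Suc m"]
    by (simp_all add: coeff_eq_0)
  moreover have "degree (pcompose P [:1, 1:]) \<le> Suc m"
    using P(1) degree_pcompose_le[of P "[:1, 1:]"] by simp
  ultimately show ?thesis
    using P(4) unfolding leading_terms_def
    by (intro exI[of _ "pcompose P [:1, 1:]"]) (simp add: poly_pcompose add.commute)
qed

lemma leading_terms_partial_sums:
  assumes "f 0 = 0" and "\<And>j. f (Suc j) = f j + g j" and "leading_terms g m a b"
  shows "leading_terms f (Suc m) (a / of_nat (m + 2)) (b / of_nat (m + 1) - a / 2)"
proof -
  obtain P where P: "degree P \<le> Suc m" "coeff P (Suc m) = a" "coeff P m = b"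
      "\<forall>j. g j = poly P (of_nat j)"
    using assms(3) by (auto simp: leading_terms_def)
  obtain q where q: "degree q \<le> Suc (Suc m)" "forward_diff q = P"
    using forward_diff_surj[of "Suc (Suc m)" P] P(1) by (auto simp: coeff_eq_0)
  define S where "S = q - [:poly q 0:]"
  have "f j = poly S (of_nat j)" for j
  proof (induction j)
    case (Suc j)
    then show ?case
      using assms(2)[of j] P(4) poly_forward_diff[of q "of_nat j"]
      by (simp add: S_def q(2) add.commute)
  qed (simp add: S_def assms(1))
  moreover have "degree S \<le> Suc (Suc m)"
    unfolding S_def by (rule degree_diff_le) (use q(1) in auto)
  moreover have "coeff S (m + 2) = a / x \<and> coeff S (m + 1) = b / y - a / 2"
    if x: "x = (of_nat (m + 2) :: 'a)" and y: "y = (of_nat (m + 1) :: 'a)" for x y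
  proof -
    have "x \<noteq> 0" "y \<noteq> 0"
      by (simp_all only: x y of_nat_eq_0_iff)
    moreover have "a = x * coeff S (m + 2)"
      using coeff_forward_diff_top[OF q(1)] by (simp add: x S_def q(2) P(2))
    moreover have "b = y * coeff S (m + 1) + x * y / 2 * coeff S (m + 2)"
    proof -
      have "2 * (Suc (Suc m) choose 2) = (m + 2) * (m + 1)"
        by (simp add: choose_two)
      then have "of_nat (Suc (Suc m) choose 2) = x * y / 2"
        unfolding x y
        by (metis (mono_tags) nonzero_mult_div_cancel_left of_nat_mult of_nat_numeral zero_neq_numeral)
      then show ?thesis
        using coeff_forward_diff[OF q(1)] by (simp add: y S_def q(2) P(3))
    qed
    ultimately show ?thesis
      by (simp add: field_simps)
  qed
  ultimately show ?thesis
    unfolding leading_terms_def by (intro exI[of _ S]) auto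
qed

lemma leading_terms_expansion:
  assumes "leading_terms f m a b"
  shows "\<exists>p. degree p \<le> m - 1 \<and>
    (\<forall>j. f j = a * of_nat j ^ Suc m + b * of_nat j ^ m + poly p (of_nat j))"
proof -
  obtain P where P: "degree P \<le> Suc m" "coeff P (Suc m) = a" "coeff P m = b"
      "\<forall>j. f j = poly P (of_nat j)"
    using assms by (auto simp: leading_terms_def)
  define p where "p = P - monom a (Suc m) - monom b m"
  have "degree p \<le> m - 1"
  proof (rule degree_le, intro allI impI)
    fix i assume "m - 1 < i"
    then consider "i = m" | "i = Suc m" | "degree P < i"
      using P(1) by linarith
    then show "coeff p i = 0"
      by cases (use P in \<open>auto simp: p_def coeff_eq_0\<close>)
  qed
  moreover have "f j = a * of_nat j ^ Suc m + b * of_nat j ^ m + poly p (of_nat j)" for j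
    using P(4) by (simp add: p_def poly_monom)
  ultimately show ?thesis
    by blast
qed

lemma sum_prod_card_subsets_insert:
  fixes g :: "'b \<Rightarrow> 'a::comm_semiring_1"
  assumes "finite A" "x \<notin> A"
  shows "(\<Sum>S | S \<subseteq> insert x A \<and> card S = Suc k. prod g S) =
    (\<Sum>S | S \<subseteq> A \<and> card S = Suc k. prod g S)
      + g x * (\<Sum>S | S \<subseteq> A \<and> card S = k. prod g S)"
proof -
  let ?P = "\<lambda>k. {S. S \<subseteq> A \<and> card S = k}"
  have fin: "finite (?P k)" for k
    using assms(1) by simp
  have "{S. S \<subseteq> insert x A \<and> card S = Suc k} = ?P (Suc k) \<union> insert x ` ?P k"
  proof (intro equalityI subsetI)
    fix S assume S: "S \<in> {S. S \<subseteq> insert x A \<and> card S = Suc k}"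
    then have "finite S"
      using assms(1) finite_subset by auto
    show "S \<in> ?P (Suc k) \<union> insert x ` ?P k"
    proof (cases "x \<in> S")
      case True
      then have "S = insert x (S - {x})" "S - {x} \<in> ?P k"
        using S \<open>finite S\<close> by auto
      then show ?thesis
        by blast
    qed (use S in auto)
  next
    fix S assume "S \<in> ?P (Suc k) \<union> insert x ` ?P k"
    then show "S \<in> {S. S \<subseteq> insert x A \<and> card S = Suc k}"
    proof
      assume "S \<in> insert x ` ?P k"
      then obtain T where "T \<in> ?P k" "S = insert x T"
        by blast
      moreover have "finite T" "x \<notin> T"
        using \<open>T \<in> ?P k\<close> assms finite_subset by auto
      ultimately show ?thesis
        by auto
    qed auto
  qed
  moreover have "?P (Suc k) \<inter> insert x ` ?P k = {}"
    using assms(2) by auto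
  moreover have "(\<Sum>S\<in>insert x ` ?P k. prod g S) = g x * (\<Sum>S\<in>?P k. prod g S)"
  proof -
    have "inj_on (insert x) (?P k)"
      using assms(2) by (auto simp: inj_on_def)
    moreover have "prod g (insert x S) = g x * prod g S" if "S \<in> ?P k" for S
      using that assms by (auto intro: prod.insert dest: finite_subset)
    ultimately show ?thesis
      by (simp add: sum.reindex sum_distrib_left)
  qed
  ultimately show ?thesis
    using fin by (simp add: sum.union_disjoint)
qed

lemma sigma_0 [simp]: "sigma 0 j = 1"
proof -
  have "{S. S \<subseteq> {1..<j} \<and> card S = 0} = {{}}"
    by (auto dest: finite_subset[OF _ finite_atLeastLessThan])
  then show ?thesis
    by (simp add: sigma_def)
qed

lemma sigma_Suc_0: "sigma (Suc k) 0 = 0"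
  by (simp add: sigma_def)

lemma sigma_Suc_Suc: "sigma (Suc k) (Suc j) = sigma (Suc k) j + of_nat j * sigma k j"
proof (cases "j = 0")
  case False
  then have "{1..<Suc j} = insert j {1..<j}"
    by auto
  then show ?thesis
    unfolding sigma_def by (simp add: sum_prod_card_subsets_insert)
qed (simp add: sigma_def)

lemma Q_Suc_0: "Q (Suc k) 0 = 0"
proof -
  have "sigma i 0 = 0" if "1 \<le> i" for i
    using that sigma_Suc_0 by (cases i) auto
  then show ?thesis
    by simp
qed

definition sigma_fps :: "nat \<Rightarrow> rat fps" where
  "sigma_fps j = Abs_fps (\<lambda>i. sigma i j)"

definition Q_fps :: "nat \<Rightarrow> rat fps" where
  "Q_fps j = Abs_fps (\<lambda>i. Q i j)"

lemma sigma_fps_mult_Q_fps: "sigma_fps j * Q_fps j = 1"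
proof (rule fps_ext)
  fix n
  show "fps_nth (sigma_fps j * Q_fps j) n = fps_nth 1 n"
  proof (cases n)
    case (Suc m)
    have "fps_nth (sigma_fps j * Q_fps j) n =
        Q (Suc m) j + (\<Sum>i=1..Suc m. sigma i j * Q (Suc m - i) j)"
      by (simp add: sigma_fps_def Q_fps_def fps_mult_nth Suc sum.atLeast_Suc_atMost)
    then show ?thesis
      using Suc by simp
  qed (simp add: sigma_fps_def Q_fps_def fps_mult_nth)
qed

lemma sigma_fps_Suc: "sigma_fps (Suc j) = (1 + fps_const (of_nat j) * fps_X) * sigma_fps j"
proof (rule fps_ext)
  fix n
  show "fps_nth (sigma_fps (Suc j)) n = fps_nth ((1 + fps_const (of_nat j) * fps_X) * sigma_fps j) n"
    by (cases n) (simp_all add: sigma_fps_def distrib_right sigma_Suc_Suc mult.assoc)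
qed

lemma Q_fps_Suc: "(1 + fps_const (of_nat j) * fps_X) * Q_fps (Suc j) = Q_fps j"
proof -
  have "sigma_fps j \<noteq> 0"
    by (metis fps_nonzero_nth sigma_0 sigma_fps_def fps_nth_Abs_fps one_neq_zero)
  moreover have
    "sigma_fps j * ((1 + fps_const (of_nat j) * fps_X) * Q_fps (Suc j)) = sigma_fps j * Q_fps j"
    using sigma_fps_mult_Q_fps[of "Suc j"] sigma_fps_mult_Q_fps[of j]
    by (simp add: sigma_fps_Suc mult_ac)
  ultimately show ?thesis
    by simp
qed

lemma Q_Suc_Suc: "Q (Suc k) (Suc j) = Q (Suc k) j - of_nat j * Q k (Suc j)"
  using arg_cong[OF Q_fps_Suc[of j], of "\<lambda>f. fps_nth f (Suc k)"]
  by (simp add: Q_fps_def distrib_right mult.assoc del: Q.simps)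

lemma sigma_leading_terms:
  "leading_terms (sigma (Suc k)) (2 * k + 1) (1 / (2 ^ Suc k * fact (Suc k)))
     (- of_nat ((k + 1) * (2 * k + 3)) / 3 * (1 / (2 ^ Suc k * fact (Suc k))))"
proof (induction k)
  case 0
  show ?case
    using leading_terms_partial_sums[OF _ _ leading_terms_of_nat, of "sigma 1"]
    by (simp add: sigma_Suc_0 sigma_Suc_Suc)
next
  case (Suc k)
  define c :: rat where "c = 1 / (2 ^ Suc k * fact (Suc k))"
  have "2 * Suc k + 1 = Suc (Suc (2 * k + 1))"
    by simp
  moreover have "1 / (2 ^ Suc (Suc k) * fact (Suc (Suc k))) = c / of_nat (Suc (2 * k + 1) + 2)"
    by (simp add: c_def field_simps)
  moreover have "- of_nat ((Suc k + 1) * (2 * Suc k + 3)) / 3 * (c / of_nat (Suc (2 * k + 1) + 2))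
      = - of_nat ((k + 1) * (2 * k + 3)) / 3 * c / of_nat (Suc (2 * k + 1) + 1) - c / 2"
    by (simp add: field_simps)
  ultimately show ?case
    using leading_terms_partial_sums[OF _ _ leading_terms_mult_of_nat[OF Suc.IH[folded c_def]]]
    by (simp only:) (simp_all add: sigma_Suc_0 sigma_Suc_Suc)
qed

lemma Q_leading_terms:
  "leading_terms (Q (Suc k)) (2 * k + 1) ((-1) ^ Suc k / (2 ^ Suc k * fact (Suc k)))
     (of_nat (k + 1) * (2 * of_nat k - 3) / 3 * ((-1) ^ Suc k / (2 ^ Suc k * fact (Suc k))))"
proof (induction k)
  case 0
  show ?case
    using leading_terms_partial_sums[OF _ _ leading_terms_uminus[OF leading_terms_of_nat], of "Q 1"]
    by (simp add: Q_Suc_0 Q_Suc_Suc del: Q.simps(2))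
next
  case (Suc k)
  define c :: rat where "c = (-1) ^ Suc k / (2 ^ Suc k * fact (Suc k))"
  have "2 * Suc k + 1 = Suc (Suc (2 * k + 1))"
    by simp
  moreover have "(-1) ^ Suc (Suc k) / (2 ^ Suc (Suc k) * fact (Suc (Suc k)))
      = - c / of_nat (Suc (2 * k + 1) + 2)"
    by (simp add: c_def field_simps)
  moreover have "of_nat (Suc k + 1) * (2 * of_nat (Suc k) - 3) / 3 * (- c / of_nat (Suc (2 * k + 1) + 2))
      = - (of_nat (k + 1) * (2 * of_nat k - 3) / 3 * c + of_nat (Suc (2 * k + 1)) * c)
          / of_nat (Suc (2 * k + 1) + 1) - - c / 2"
    by (simp add: field_simps)
  ultimately show ?case
    using leading_terms_partial_sums[OF _ _ leading_terms_uminus[OF leading_terms_mult_of_nat[OF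
          leading_terms_shift[OF Suc.IH[folded c_def]]]]]
    by (simp only:) (simp_all add: Q_Suc_0 Q_Suc_Suc del: Q.simps(2))
qed

theorem lemma2p7:
  fixes k :: nat
  assumes "k \<ge> 1"
  shows "(\<exists>p :: rat poly. degree p \<le> 2*k - 2 \<and>
            (\<forall>j::nat. j \<ge> 1 \<longrightarrow>
               sigma k j = 1 / (2^k * fact k) * of_nat j ^ (2*k)
                 - of_nat (2*k + 1) / (3 * 2^k * fact (k - 1)) * of_nat j ^ (2*k - 1)
                 + poly p (of_nat j)))
       \<and> (\<exists>p :: rat poly. degree p \<le> 2*k - 2 \<and>
            (\<forall>j::nat. j \<ge> 1 \<longrightarrow>
               Q k j = (-1)^k / (2^k * fact k) * of_nat j ^ (2*k)
                 + (-1)^k * (2 * of_nat k - 5) / (3 * 2^k * fact (k - 1)) * of_nat j ^ (2*k - 1)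
                 + poly p (of_nat j)))"
proof -
  obtain n where k: "k = Suc n"
    using assms by (cases k) auto
  have "fact (Suc n) = of_nat (Suc n) * (fact n :: rat)" "of_nat (Suc n) \<noteq> (0::rat)"
    by simp_all
  then have "- (of_nat (2 * Suc n + 1) / (3 * 2 ^ Suc n * fact (Suc n - 1)))
      = - of_nat ((n + 1) * (2 * n + 3)) / 3 * (1 / (2 ^ Suc n * fact (Suc n)) :: rat)"
    and "(-1) ^ Suc n * (2 * of_nat (Suc n) - 5) / (3 * 2 ^ Suc n * fact (Suc n - 1))
      = of_nat (n + 1) * (2 * of_nat n - 3) / 3 * ((-1) ^ Suc n / (2 ^ Suc n * fact (Suc n)) :: rat)"
    and "2 * Suc n - 1 = 2 * n + 1"
    unfolding diff_Suc_1 by (simp_all add: field_simps del: of_nat_Suc, simp_all add: algebra_simps)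
  then have sigma_k: "leading_terms (sigma k) (2 * k - 1) (1 / (2 ^ k * fact k))
      (- (of_nat (2 * k + 1) / (3 * 2 ^ k * fact (k - 1))))"
    and Q_k: "leading_terms (Q k) (2 * k - 1) ((-1) ^ k / (2 ^ k * fact k))
      ((-1) ^ k * (2 * of_nat k - 5) / (3 * 2 ^ k * fact (k - 1)))"
    unfolding k using sigma_leading_terms Q_leading_terms by simp_all
  have degrees: "Suc (2 * k - 1) = 2 * k" "2 * k - 1 - 1 = 2 * k - 2"
    using assms by simp_all
  show ?thesis
    using leading_terms_expansion[OF sigma_k] leading_terms_expansion[OF Q_k]
    unfolding degrees mult_minus_left diff_conv_add_uminus[symmetric] by blast
qed

end
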